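(* There is no real number $s$ such that $S(a,b)\le\lambda_s(a,b)$ holds for all $a,b>0$.
   Context: For $a,b>0$ with $a\neq b$ define $$\lambda_s(a,b)=\begin{cases}\dfrac{s-1}{s+1}\cdot\dfrac{a^{s+1}+b^{s+1}-2\left(\frac{a+b}{2}\right)^{s+1}}{a^s+b^s-2\left(\frac{a+b}{2}\right)^s}, & s\in\mathbb{R}\setminus\{-1,0,1\},\\[3mm] \dfrac{2\log\frac{a+b}{2}-\log a-\log b}{\frac{1}{2a}+\frac{1}{2b}-\frac{2}{a+b}}, & s=-1,\\[3mm] \dfrac{a\log a+b\log b-(a+b)\log\frac{a+b}{2}}{2\log\frac{a+b}{2}-\log a-\log b}, & s=0,\\[3mm] \dfrac{(b-a)^2}{4\left(a\log a+b\log b-(a+b)\log\frac{a+b}{2}\right)}, & s=1,\end{cases}$$ and $\lambda_s(a,a)=a$. The Gini mean is $S(a,b)=a^{a/(a+b)}\,b^{b/(a+b)}$. *)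

theory Defs
  imports Complex_Main
begin

definition lam :: "real \<Rightarrow> real \<Rightarrow> real \<Rightarrow> real" where
  "lam s a b =
    (if a = b then a
     else if s = -1 then
       (2 * ln ((a+b)/2) - ln a - ln b) / (1/(2*a) + 1/(2*b) - 2/(a+b))
     else if s = 0 then
       (a * ln a + b * ln b - (a+b) * ln ((a+b)/2)) / (2 * ln ((a+b)/2) - ln a - ln b)
     else if s = 1 then
       (b - a)^2 / (4 * (a * ln a + b * ln b - (a+b) * ln ((a+b)/2)))
     else
       (s - 1) / (s + 1) *
       ((a powr (s+1) + b powr (s+1) - 2 * ((a+b)/2) powr (s+1)) /
        (a powr s + b powr s - 2 * ((a+b)/2) powr s)))"

definition gini :: "real \<Rightarrow> real \<Rightarrow> real" where
  "gini a b = a powr (a/(a+b)) * b powr (b/(a+b))"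

end

theory Submission
  imports Defs "HOL-Analysis.Harmonic_Numbers" "HOL-Real_Asymp.Real_Asymp"
begin

(*
  Idea: take a = 1 and let b = t tend to 0 from the right.  The Gini mean
  S(1,t) = t^(t/(1+t)) tends to 1, whereas for every real s the mean
  lambda_s(1,t) converges to a limit strictly below 1.  Passing to the limit
  in S(1,t) <= lambda_s(1,t) would give 1 <= limit < 1, which is absurd.
*)

lemma eventually_in_unit_interval: "eventually (\<lambda>t::real. 0 < t \<and> t < 1) (at_right 0)"
  using eventually_at_right_real[of 0 1] by simp

lemma tendsto_at_right_0_transfer:
  assumes "(g \<longlongrightarrow> L) (at_right 0)" and "\<And>t::real. 0 < t \<Longrightarrow> t < 1 \<Longrightarrow> f t = g t"
  shows "(f \<longlongrightarrow> L) (at_right 0)"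
  using assms(1)
  by (rule tendsto_cong[THEN iffD1, rotated])
     (rule eventually_mono[OF eventually_in_unit_interval], use assms(2) in auto)

lemma gini_one_tendsto: "((\<lambda>t. gini 1 t) \<longlongrightarrow> 1) (at_right 0)"
proof -
  have "((\<lambda>t::real. t powr (t/(1+t))) \<longlongrightarrow> 1) (at_right 0)" by real_asymp
  then show ?thesis by (simp add: gini_def)
qed

lemma lam_minus_one_tendsto: "((\<lambda>t. lam (-1) 1 t) \<longlongrightarrow> 0) (at_right 0)"
proof -
  have "((\<lambda>t::real. (2 * ln ((1+t)/2) - ln 1 - ln t) / (1/(2*1) + 1/(2*t) - 2/(1+t)))
          \<longlongrightarrow> 0) (at_right 0)"
    by real_asymp
  then show ?thesis by (rule tendsto_at_right_0_transfer) (simp add: lam_def)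
qed

lemma lam_zero_tendsto: "((\<lambda>t. lam 0 1 t) \<longlongrightarrow> 0) (at_right 0)"
proof -
  have "((\<lambda>t::real. (1 * ln 1 + t * ln t - (1+t) * ln ((1+t)/2)) / (2 * ln ((1+t)/2) - ln 1 - ln t))
          \<longlongrightarrow> 0) (at_right 0)"
    by real_asymp
  then show ?thesis by (rule tendsto_at_right_0_transfer) (simp add: lam_def)
qed

lemma lam_one_tendsto: "((\<lambda>t. lam 1 1 t) \<longlongrightarrow> 1 / (4 * ln 2)) (at_right 0)"
proof -
  have "((\<lambda>t::real. (t - 1)^2 / (4 * (1 * ln 1 + t * ln t - (1+t) * ln ((1+t)/2))))
          \<longlongrightarrow> - (inverse (ln (1 / 2)) / 4)) (at_right 0)"
    by real_asymp
  also have "- (inverse (ln (1 / 2)) / 4) = 1 / (4 * ln (2::real))"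
    by (simp add: ln_div field_simps)
  finally show ?thesis by (rule tendsto_at_right_0_transfer) (simp add: lam_def)
qed

lemma lam_one_generic:
  assumes "s \<noteq> -1" "s \<noteq> 0" "s \<noteq> 1" "t \<noteq> 1"
  shows "lam s 1 t = (s-1)/(s+1) *
           ((1 + t powr (s+1) - 2 * ((1+t)/2) powr (s+1)) / (1 + t powr s - 2 * ((1+t)/2) powr s))"
  using assms by (simp add: lam_def)

text \<open>This uses convexity of 2^s:
  2^s <= 1 + s on [0,1] and 2^s >= 2 + 2(s-1) ln 2 for s >= 1.\<close>
lemma two_powr_sign:
  fixes s :: real
  assumes "s > 0" "s \<noteq> 1"
  shows "(s + 3 - 2 * 2 powr s) * (2 powr s - 2) < 0"
proof (cases "s > 1")
  case True
  have "exp ((s-1) * ln 2) \<ge> 1 + (s-1) * ln (2::real)" by (rule exp_ge_add_one_self)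
  moreover have "2 powr s = 2 * exp ((s-1) * ln 2)"
    by (simp add: powr_def algebra_simps exp_diff)
  moreover have "(s-1) * ln 2 \<ge> (s-1) * (2/3)"
    using True ln2_ge_two_thirds by (intro mult_left_mono) auto
  ultimately have "2 * 2 powr s \<ge> 4 + (8/3) * (s-1)" by linarith
  then have "s + 3 - 2 * 2 powr s < 0 \<and> 2 powr s - 2 > 0" using True by (auto simp: field_simps)
  then show ?thesis by (simp add: mult_neg_pos)
next
  case False
  with assms have s_lt_1: "s < 1" by simp
  have "exp ((1 - s) *\<^sub>R 0 + s *\<^sub>R ln 2) \<le> (1 - s) * exp 0 + s * exp (ln 2)"
    by (rule convex_onD[OF exp_convex]) (use assms s_lt_1 in auto)
  then have "2 powr s \<le> 1 + s" by (simp add: powr_def algebra_simps)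
  then have "s + 3 - 2 * 2 powr s > 0" "2 powr s - 2 < 0" using s_lt_1 by auto
  then show ?thesis by (simp add: mult_pos_neg)
qed

text \<open>Positive generic parameter: t^s and t^(s+1) vanish, so the limit is
  (s-1)/(s+1) * (1 - 1/p)/(1 - 2/p) with p = 2^s, which is below 1.\<close>
lemma lam_pos_tendsto:
  assumes s_pos: "s > 0" and s_ne_1: "s \<noteq> 1"
  shows "\<exists>L<1. ((\<lambda>t. lam s 1 t) \<longlongrightarrow> L) (at_right 0)"
proof -
  define p where "p = 2 powr s"
  have p_gt_1: "p > 1" using s_pos by (simp add: p_def)
  have sign: "(s + 3 - 2 * p) * (p - 2) < 0"
    using two_powr_sign[OF s_pos s_ne_1] by (simp add: p_def)
  then have p_ne_2: "p \<noteq> 2" by auto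
  define L where "L = (s-1)/(s+1) * ((1 + 0 - 2 * (1/(2*p))) / (1 + 0 - 2 * (1/p)))"
  have "(1 + 0 - 2 * (1/(2*p))) / (1 + 0 - 2 * (1/p)) = (p-1)/(p-2)"
    using p_gt_1 p_ne_2 by (simp add: field_simps)
  then have "L = (s-1) * (p-1) / ((s+1) * (p-2))" by (simp add: L_def)
  then have "L - 1 = ((s-1) * (p-1) - (s+1) * (p-2)) / ((s+1) * (p-2))"
    using p_ne_2 s_pos by (simp add: diff_divide_distrib)
  also have "\<dots> = (s + 3 - 2 * p) / ((s+1) * (p-2))"
    by (simp add: algebra_simps)
  also have "\<dots> < 0"
    using sign s_pos by (auto simp: divide_less_0_iff mult_less_0_iff zero_less_mult_iff)
  finally have L_lt_1: "L < 1" by simp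
  have t_ge_0: "eventually (\<lambda>t::real. 0 \<le> t) (at_right 0)"
    by (rule eventually_mono[OF eventually_in_unit_interval]) auto
  have t_to_0: "((\<lambda>t::real. t) \<longlongrightarrow> 0) (at_right 0)" by (rule tendsto_ident_at)
  have pow_s1: "((\<lambda>t::real. t powr (s+1)) \<longlongrightarrow> 0) (at_right 0)"
    by (rule tendsto_zero_powrI[OF t_to_0 tendsto_const t_ge_0]) (use s_pos in simp)
  have pow_s: "((\<lambda>t::real. t powr s) \<longlongrightarrow> 0) (at_right 0)"
    by (rule tendsto_zero_powrI[OF t_to_0 tendsto_const t_ge_0]) (use s_pos in simp)
  have half_s1: "(1/2::real) powr (s+1) = 1/(2*p)" by (simp add: p_def powr_divide powr_add)
  have half_s: "(1/2::real) powr s = 1/p" by (simp add: p_def powr_divide)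
  have mid_s1: "((\<lambda>t::real. ((1+t)/2) powr (s+1)) \<longlongrightarrow> 1/(2*p)) (at_right 0)"
    unfolding half_s1[symmetric] by (rule tendsto_powr) (auto intro!: tendsto_eq_intros)
  have mid_s: "((\<lambda>t::real. ((1+t)/2) powr s) \<longlongrightarrow> 1/p) (at_right 0)"
    unfolding half_s[symmetric] by (rule tendsto_powr) (auto intro!: tendsto_eq_intros)
  have den: "1 + 0 - 2 * (1/p) \<noteq> 0" using p_gt_1 p_ne_2 by (auto simp: field_simps)
  have "((\<lambda>t. (s-1)/(s+1) * ((1 + t powr (s+1) - 2 * ((1+t)/2) powr (s+1)) /
          (1 + t powr s - 2 * ((1+t)/2) powr s))) \<longlongrightarrow> L) (at_right 0)"
    unfolding L_def by (intro tendsto_intros pow_s1 pow_s mid_s1 mid_s den)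
  then have "((\<lambda>t. lam s 1 t) \<longlongrightarrow> L) (at_right 0)"
    by (rule tendsto_at_right_0_transfer) (use s_pos s_ne_1 in \<open>simp add: lam_one_generic\<close>)
  with L_lt_1 show ?thesis by blast
qed

text \<open>Negative generic parameter: after multiplying numerator and denominator
  by t^(-s) (which tends to 0) the quotient tends to 0.\<close>
lemma lam_neg_tendsto:
  assumes s_neg: "s < 0" and s_ne_m1: "s \<noteq> -1"
  shows "((\<lambda>t. lam s 1 t) \<longlongrightarrow> 0) (at_right 0)"
proof -
  define g where "g t = (s-1)/(s+1) *
    ((t powr (-s) + t - 2 * (t powr (-s) * ((1+t)/2) powr (s+1))) /
     (t powr (-s) + 1 - 2 * (t powr (-s) * ((1+t)/2) powr s)))" for t :: real
  have t_ge_0: "eventually (\<lambda>t::real. 0 \<le> t) (at_right 0)"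
    by (rule eventually_mono[OF eventually_in_unit_interval]) auto
  have t_to_0: "((\<lambda>t::real. t) \<longlongrightarrow> 0) (at_right 0)" by (rule tendsto_ident_at)
  have pow_ms: "((\<lambda>t::real. t powr (-s)) \<longlongrightarrow> 0) (at_right 0)"
    by (rule tendsto_zero_powrI[OF t_to_0 tendsto_const t_ge_0]) (use s_neg in simp)
  have mid_s1: "((\<lambda>t::real. ((1+t)/2) powr (s+1)) \<longlongrightarrow> (1/2) powr (s+1)) (at_right 0)"
    by (rule tendsto_powr) (auto intro!: tendsto_eq_intros)
  have mid_s: "((\<lambda>t::real. ((1+t)/2) powr s) \<longlongrightarrow> (1/2) powr s) (at_right 0)"
    by (rule tendsto_powr) (auto intro!: tendsto_eq_intros)
  have "(g \<longlongrightarrow> (s-1)/(s+1) * ((0 + 0 - 2 * (0 * (1/2) powr (s+1))) /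
                 (0 + 1 - 2 * (0 * (1/2) powr s)))) (at_right 0)"
    unfolding g_def by (intro tendsto_intros pow_ms mid_s1 mid_s t_to_0) simp
  then have g_to_0: "(g \<longlongrightarrow> 0) (at_right 0)" by simp
  have "lam s 1 t = g t" if t: "0 < t" "t < 1" for t :: real
  proof -
    define m where "m = t powr (-s)"
    have "m > 0" using t by (simp add: m_def)
    have m_s1: "m * t powr (s+1) = t" using t by (simp add: m_def powr_add[symmetric])
    have m_s: "m * t powr s = 1" using t by (simp add: m_def powr_add[symmetric])
    have "(1 + t powr (s+1) - 2*((1+t)/2) powr (s+1)) / (1 + t powr s - 2*((1+t)/2) powr s)
        = (m * (1 + t powr (s+1) - 2*((1+t)/2) powr (s+1))) / (m * (1 + t powr s - 2*((1+t)/2) powr s))"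
      using \<open>m > 0\<close> by simp
    also have "\<dots> = (m + t - 2 * (m * ((1+t)/2) powr (s+1))) / (m + 1 - 2 * (m * ((1+t)/2) powr s))"
      by (simp add: right_diff_distrib distrib_left m_s1 m_s mult.left_commute[of m 2])
    finally show ?thesis
      using t s_neg s_ne_m1 by (simp add: lam_one_generic g_def m_def)
  qed
  with g_to_0 show ?thesis by (rule tendsto_at_right_0_transfer)
qed

lemma lam_limit_below_one: "\<exists>L<1. ((\<lambda>t. lam s 1 t) \<longlongrightarrow> L) (at_right 0)"
proof -
  consider "s = -1" | "s = 0" | "s = 1" | "s > 0 \<and> s \<noteq> 1" | "s < 0 \<and> s \<noteq> -1" by linarith
  then show ?thesis
  proof cases
    case 1
    then show ?thesis using lam_minus_one_tendsto by (intro exI[of _ 0]) auto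
  next
    case 2
    then show ?thesis using lam_zero_tendsto by (intro exI[of _ 0]) auto
  next
    case 3
    have "1 / (4 * ln 2) < (1::real)" using ln2_ge_two_thirds by (simp add: field_simps)
    with 3 show ?thesis using lam_one_tendsto by blast
  next
    case 4
    then show ?thesis using lam_pos_tendsto by auto
  next
    case 5
    then show ?thesis using lam_neg_tendsto by (intro exI[of _ 0]) auto
  qed
qed

theorem theorem3:
  shows "\<not> (\<exists>s::real. \<forall>a b::real. a > 0 \<longrightarrow> b > 0 \<longrightarrow> gini a b \<le> lam s a b)"
proof
  assume "\<exists>s::real. \<forall>a b::real. a > 0 \<longrightarrow> b > 0 \<longrightarrow> gini a b \<le> lam s a b"
  then obtain s where bound: "\<And>a b. a > 0 \<Longrightarrow> b > 0 \<Longrightarrow> gini a b \<le> lam s a b" by blast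
  obtain L where "L < 1" and lam_lim: "((\<lambda>t. lam s 1 t) \<longlongrightarrow> L) (at_right 0)"
    using lam_limit_below_one by blast
  have "eventually (\<lambda>t. gini 1 t \<le> lam s 1 t) (at_right 0)"
    by (rule eventually_mono[OF eventually_in_unit_interval]) (simp add: bound)
  then have "1 \<le> L"
    using tendsto_le[OF trivial_limit_at_right_real lam_lim gini_one_tendsto] by simp
  with \<open>L < 1\<close> show False by simp
qed

end
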